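(* Let $X_1,X_2,\dots$ be i.i.d. with $\mathbf{E}X_1=-a<0$ and $\mathrm{Var}(X_1)<\infty$. Then for every $\varepsilon>0$ there exists $C>0$ such that \[ \liminf_{x\to\infty}\frac{\mathbf{P}(A_\tau>x)}{\overline F(\sqrt{2ax}+Cx^{1/4+\varepsilon})}\ge\mathbf{E}\tau. \]
   Context: $S_0=0$, $S_n=X_1+\dots+X_n$, $\overline F(x)=\mathbf{P}(X_1>x)$, $\tau=\min\{n\ge1:S_n\le0\}$, $A_\tau=\sum_{k=0}^{\tau-1}S_k$. *)

theory Defs
  imports "HOL-Probability.Probability"
begin

definition S :: "(nat \<Rightarrow> 'a \<Rightarrow> real) \<Rightarrow> nat \<Rightarrow> 'a \<Rightarrow> real" where
  "S X n \<omega> = (\<Sum>i\<in>{1..n}. X i \<omega>)"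

definition tau :: "(nat \<Rightarrow> 'a \<Rightarrow> real) \<Rightarrow> 'a \<Rightarrow> enat" where
  "tau X \<omega> = (if \<exists>n\<ge>1. S X n \<omega> \<le> 0
               then enat (LEAST n. n \<ge> 1 \<and> S X n \<omega> \<le> 0) else \<infinity>)"

definition A_tau :: "(nat \<Rightarrow> 'a \<Rightarrow> real) \<Rightarrow> 'a \<Rightarrow> real" where
  "A_tau X \<omega> = (case tau X \<omega> of enat t \<Rightarrow> (\<Sum>k<t. S X k \<omega>) | \<infinity> \<Rightarrow> 0)"

definition Fbar :: "'a measure \<Rightarrow> (nat \<Rightarrow> 'a \<Rightarrow> real) \<Rightarrow> real \<Rightarrow> real" where
  "Fbar M X y = measure M {\<omega> \<in> space M. X 1 \<omega> > y}"

end

theory Submission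
  imports Defs
begin

text \<open>
  One big jump. For \<open>n < N\<close> let \<open>E\<^sub>n\<close> be the event that the walk stays positive with all
  increments at most \<open>y = \<surd>(2 a x) + \<lambda>\<close> up to time \<open>n\<close>, then jumps above \<open>y\<close>, and afterwards
  follows its drift \<open>-a\<close> up to an error less than \<open>\<lambda>\<close> for \<open>K = \<lfloor>\<surd>(2 a x) / a\<rfloor>\<close> steps. On \<open>E\<^sub>n\<close> the
  excursion lies above the line \<open>\<surd>(2 a x) - k a\<close>, whose area \<open>\<Sum>\<^sub>k\<^sub>\<le>\<^sub>K (\<surd>(2 a x) - k a)\<close> is at least \<open>x\<close>.
  The events \<open>E\<^sub>n\<close> are disjoint, and by independence
  \<open>P(E\<^sub>n) \<ge> (P(\<tau> > n) - n Fbar(y)) Fbar(y) (1 - K Var X\<^sub>1 / \<lambda>\<^sup>2)\<close>, the last factor coming from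
  Kolmogorov's maximal inequality. Summing over \<open>n < N\<close> and taking \<open>\<lambda> = x\<^bsup>1/4+\<epsilon>\<^esup>\<close>, the
  correction terms vanish as \<open>x \<rightarrow> \<infinity>\<close>, while \<open>\<Sum>\<^sub>n\<^sub><\<^sub>N P(\<tau> > n)\<close> approaches \<open>E \<tau>\<close>; so \<open>C = 1\<close> works.
\<close>

lemma (in prob_space) indep_var_restrict_compose:
  assumes "indep_vars M' X I" "A \<inter> B = {}" "A \<subseteq> I" "B \<subseteq> I"
    and "f \<in> measurable (PiM A M') N\<^sub>1" "g \<in> measurable (PiM B M') N\<^sub>2"
  shows "indep_var N\<^sub>1 (\<lambda>\<omega>. f (\<lambda>i\<in>A. X i \<omega>)) N\<^sub>2 (\<lambda>\<omega>. g (\<lambda>i\<in>B. X i \<omega>))"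
  using indep_var_compose[OF indep_var_restrict[OF assms(1-4)] assms(5,6)]
  by (simp add: comp_def)

lemma (in prob_space) prob_restrict_indep:
  assumes "indep_vars M' X I" "A \<inter> B = {}" "A \<subseteq> I" "B \<subseteq> I"
    and "Measurable.pred (PiM A M') P" "Measurable.pred (PiM B M') Q"
  shows "prob {\<omega>\<in>space M. P (\<lambda>i\<in>A. X i \<omega>) \<and> Q (\<lambda>i\<in>B. X i \<omega>)} =
         prob {\<omega>\<in>space M. P (\<lambda>i\<in>A. X i \<omega>)} * prob {\<omega>\<in>space M. Q (\<lambda>i\<in>B. X i \<omega>)}"
proof -
  have "indep_var (count_space UNIV) (\<lambda>\<omega>. P (\<lambda>i\<in>A. X i \<omega>))
                  (count_space UNIV) (\<lambda>\<omega>. Q (\<lambda>i\<in>B. X i \<omega>))"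
    using assms by (intro indep_var_restrict_compose) auto
  from indep_varD[OF this, of "{True}" "{True}"] show ?thesis
    by (simp add: vimage_def Int_def conj_ac)
qed

lemma sum_restrict_subset: "J \<subseteq> A \<Longrightarrow> (\<Sum>i\<in>J. f ((\<lambda>i\<in>A. g i) i)) = (\<Sum>i\<in>J. f (g i))"
  by (intro sum.cong) auto

lemma S_0[simp]: "S X 0 \<omega> = 0"
  by (simp add: S_def)

lemma S_Suc: "S X (Suc n) \<omega> = S X n \<omega> + X (Suc n) \<omega>"
  by (simp add: S_def)

lemma tau_gt_iff: "enat n < tau X \<omega> \<longleftrightarrow> (\<forall>j\<in>{1..n}. 0 < S X j \<omega>)"
proof (cases "\<exists>n\<ge>1. S X n \<omega> \<le> 0")
  case True
  define L where "L = (LEAST n. n \<ge> 1 \<and> S X n \<omega> \<le> 0)"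
  have tau: "tau X \<omega> = enat L"
    unfolding tau_def L_def using True by simp
  have L: "L \<ge> 1 \<and> S X L \<omega> \<le> 0"
    unfolding L_def using True by (rule LeastI_ex)
  have below_L: "0 < S X j \<omega>" if "1 \<le> j" "j < L" for j
    using not_less_Least[of j "\<lambda>n. n \<ge> 1 \<and> S X n \<omega> \<le> 0"] that unfolding L_def by auto
  show ?thesis
  proof
    assume "enat n < tau X \<omega>"
    then show "\<forall>j\<in>{1..n}. 0 < S X j \<omega>"
      using tau below_L by auto
  next
    assume pos: "\<forall>j\<in>{1..n}. 0 < S X j \<omega>"
    have "\<not> L \<le> n"
    proof
      assume "L \<le> n"
      then have "0 < S X L \<omega>" using pos L by auto
      then show False using L by simp
    qed
    then show "enat n < tau X \<omega>"
      using tau by simp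
  qed
next
  case False
  then show ?thesis
    by (simp add: tau_def) (meson atLeastAtMost_iff not_le)
qed

lemma tau_eq_infinity_iff: "tau X \<omega> = \<infinity> \<longleftrightarrow> (\<forall>j\<ge>1. 0 < S X j \<omega>)"
proof -
  have "tau X \<omega> = \<infinity> \<longleftrightarrow> \<not> (\<exists>n\<ge>1. S X n \<omega> \<le> 0)"
    by (simp add: tau_def)
  also have "\<dots> \<longleftrightarrow> (\<forall>j\<ge>1. 0 < S X j \<omega>)"
    by (meson not_le)
  finally show ?thesis .
qed

lemma tau_eq_enat_iff:
  "tau X \<omega> = enat t \<longleftrightarrow> 1 \<le> t \<and> S X t \<omega> \<le> 0 \<and> (\<forall>j\<in>{1..<t}. 0 < S X j \<omega>)"
proof
  assume tau: "tau X \<omega> = enat t"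
  then have ex: "\<exists>n\<ge>1. S X n \<omega> \<le> 0"
    unfolding tau_def by (auto split: if_splits)
  then have "t = (LEAST n. n \<ge> 1 \<and> S X n \<omega> \<le> 0)"
    using tau unfolding tau_def by simp
  then have "t \<ge> 1 \<and> S X t \<omega> \<le> 0"
    using LeastI_ex[OF ex] by simp
  moreover have "0 < S X j \<omega>" if "j \<in> {1..<t}" for j
    using that tau tau_gt_iff[of j X \<omega>] by auto
  ultimately show "1 \<le> t \<and> S X t \<omega> \<le> 0 \<and> (\<forall>j\<in>{1..<t}. 0 < S X j \<omega>)"
    by blast
next
  assume t: "1 \<le> t \<and> S X t \<omega> \<le> 0 \<and> (\<forall>j\<in>{1..<t}. 0 < S X j \<omega>)"
  have "(LEAST n. n \<ge> 1 \<and> S X n \<omega> \<le> 0) = t"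
  proof (rule Least_equality)
    show "1 \<le> t \<and> S X t \<omega> \<le> 0"
      using t by simp
    show "t \<le> n" if "1 \<le> n \<and> S X n \<omega> \<le> 0" for n
      using t that by (meson atLeastLessThan_iff not_le not_less)
  qed
  then show "tau X \<omega> = enat t"
    using t unfolding tau_def by auto
qed

lemma A_tau_gt_iff:
  assumes "x \<ge> 0"
  shows "x < A_tau X \<omega> \<longleftrightarrow> (\<exists>t. tau X \<omega> = enat t \<and> x < (\<Sum>k<t. S X k \<omega>))"
  using assms by (cases "tau X \<omega>") (auto simp: A_tau_def)

lemma sum_le_A_tau:
  assumes finite: "tau X \<omega> \<noteq> \<infinity>" and pos: "\<forall>j\<in>{1..N}. 0 < S X j \<omega>" and J: "J \<subseteq> {..N}"
  shows "(\<Sum>k\<in>J. S X k \<omega>) \<le> A_tau X \<omega>"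
proof -
  obtain t where t: "tau X \<omega> = enat t"
    using finite by auto
  have "N < t"
    using pos tau_gt_iff[of N X \<omega>] t by simp
  moreover have "0 \<le> S X k \<omega>" if "k < t" for k
  proof (cases "k = 0")
    case False
    have "enat k < tau X \<omega>"
      using that t by simp
    then have "\<forall>j\<in>{1..k}. 0 < S X j \<omega>"
      by (simp add: tau_gt_iff)
    then show ?thesis
      using False by (meson atLeastAtMost_iff less_imp_le less_one not_le order_refl)
  qed simp
  ultimately have "(\<Sum>k\<in>J. S X k \<omega>) \<le> (\<Sum>k<t. S X k \<omega>)"
    using J by (intro sum_mono2) auto
  then show ?thesis
    by (simp add: A_tau_def t)
qed

lemma sum_arith_progression_ge:
  fixes z a :: real
  assumes z: "z \<ge> 0" and a: "a > 0"
  shows "z\<^sup>2 / (2 * a) \<le> (\<Sum>k\<le>nat \<lfloor>z / a\<rfloor>. z - real k * a)"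
proof -
  define q where "q = z / a"
  define K where "K = nat \<lfloor>q\<rfloor>"
  define d where "d = q - K"
  have "real K \<le> q" "q < real K + 1"
    using z a by (auto simp: K_def q_def of_nat_nat)
  then have d: "0 \<le> d" "d \<le> 1"
    by (auto simp: d_def)
  have sum: "2 * (\<Sum>k\<le>K. z - real k * a) = (real K + 1) * (2 * z - real K * a)"
    by (induction K) (auto simp: algebra_simps)
  have "(real K + 1) * (2 * q - real K) - q\<^sup>2 = real K + d * (2 - d)"
    by (simp add: d_def power2_eq_square algebra_simps)
  moreover have "d * (2 - d) \<ge> 0"
    using d by simp
  ultimately have "q\<^sup>2 \<le> (real K + 1) * (2 * q - real K)"
    by simp
  then have "a * q\<^sup>2 / 2 \<le> a * ((real K + 1) * (2 * q - real K)) / 2"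
    using a by simp
  moreover have "z = a * q"
    using a by (simp add: q_def)
  ultimately show ?thesis
    using a sum unfolding K_def q_def[symmetric] by (simp add: power2_eq_square algebra_simps)
qed

locale iid_walk = prob_space M for M :: "'a measure" +
  fixes X :: "nat \<Rightarrow> 'a \<Rightarrow> real" and a :: real
  assumes X_measurable[measurable]: "\<And>i. i \<ge> 1 \<Longrightarrow> X i \<in> borel_measurable M"
    and X_indep: "indep_vars (\<lambda>_. borel) X {1..}"
    and X_distr: "\<And>i. i \<ge> 1 \<Longrightarrow> distr M borel (X i) = distr M borel (X 1)"
    and X_integrable: "integrable M (X 1)"
    and a_pos: "a > 0"
    and X_mean: "(\<integral>\<omega>. X 1 \<omega> \<partial>M) = - a"
    and X_square_integrable: "integrable M (\<lambda>\<omega>. (X 1 \<omega>)\<^sup>2)"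
begin

lemma integrable_X_iff:
  fixes f :: "real \<Rightarrow> real"
  assumes "i \<ge> 1" "f \<in> borel_measurable borel"
  shows "integrable M (\<lambda>\<omega>. f (X i \<omega>)) \<longleftrightarrow> integrable M (\<lambda>\<omega>. f (X 1 \<omega>))"
proof -
  have "integrable M (\<lambda>\<omega>. f (X i \<omega>)) \<longleftrightarrow> integrable (distr M borel (X i)) f"
    using assms X_measurable by (subst integrable_distr_eq) auto
  also have "\<dots> \<longleftrightarrow> integrable (distr M borel (X 1)) f"
    using X_distr[OF assms(1)] by simp
  also have "\<dots> \<longleftrightarrow> integrable M (\<lambda>\<omega>. f (X 1 \<omega>))"
    using assms X_measurable by (subst integrable_distr_eq) auto
  finally show ?thesis .
qed

lemma integral_X_eq:
  fixes f :: "real \<Rightarrow> real"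
  assumes "i \<ge> 1" "f \<in> borel_measurable borel"
  shows "(\<integral>\<omega>. f (X i \<omega>) \<partial>M) = (\<integral>\<omega>. f (X 1 \<omega>) \<partial>M)"
proof -
  have "(\<integral>\<omega>. f (X i \<omega>) \<partial>M) = (\<integral>x. f x \<partial>distr M borel (X i))"
    using assms X_measurable by (subst integral_distr) auto
  also have "\<dots> = (\<integral>x. f x \<partial>distr M borel (X 1))"
    using X_distr[OF assms(1)] by simp
  also have "\<dots> = (\<integral>\<omega>. f (X 1 \<omega>) \<partial>M)"
    using assms X_measurable by (subst integral_distr) auto
  finally show ?thesis .
qed

lemma prob_X_gt: "i \<ge> 1 \<Longrightarrow> prob {\<omega>\<in>space M. y < X i \<omega>} = Fbar M X y"
proof -
  assume i: "i \<ge> 1"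
  have "prob {\<omega>\<in>space M. y < X i \<omega>} = measure (distr M borel (X i)) {y<..}"
    using i by (simp add: measure_distr vimage_def Int_def conj_commute)
  also have "\<dots> = Fbar M X y"
    by (simp add: X_distr[OF i] measure_distr Fbar_def vimage_def Int_def conj_commute)
  finally show ?thesis .
qed

definition Y :: "nat \<Rightarrow> 'a \<Rightarrow> real" where "Y i \<omega> = X i \<omega> + a"

definition sigma2 :: real where "sigma2 = (\<integral>\<omega>. (X 1 \<omega> + a)\<^sup>2 \<partial>M)"

lemma Y_measurable[measurable]: "i \<ge> 1 \<Longrightarrow> Y i \<in> borel_measurable M"
  unfolding Y_def by measurable

lemma Y_indep: "indep_vars (\<lambda>_. borel) Y {1..}"
  unfolding Y_def[abs_def] by (rule indep_vars_compose2[OF X_indep]) simp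

lemma integrable_Y: "i \<ge> 1 \<Longrightarrow> integrable M (Y i)"
  using integrable_X_iff[of i "\<lambda>x. x + a"] X_integrable by (simp add: Y_def[abs_def])

lemma integral_Y: "i \<ge> 1 \<Longrightarrow> (\<integral>\<omega>. Y i \<omega> \<partial>M) = 0"
  using integral_X_eq[of i "\<lambda>x. x + a"] X_integrable X_mean prob_space by (simp add: Y_def)

lemma integrable_Y_square: "i \<ge> 1 \<Longrightarrow> integrable M (\<lambda>\<omega>. (Y i \<omega>)\<^sup>2)"
proof -
  assume i: "i \<ge> 1"
  have "integrable M (\<lambda>\<omega>. (X 1 \<omega>)\<^sup>2 + 2 * a * X 1 \<omega> + a\<^sup>2)"
    using X_integrable X_square_integrable by simp
  then have "integrable M (\<lambda>\<omega>. (X 1 \<omega> + a)\<^sup>2)"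
    by (simp add: power2_sum algebra_simps)
  then show ?thesis using integrable_X_iff[OF i, of "\<lambda>x. (x + a)\<^sup>2"] by (simp add: Y_def)
qed

lemma integral_Y_square: "i \<ge> 1 \<Longrightarrow> (\<integral>\<omega>. (Y i \<omega>)\<^sup>2 \<partial>M) = sigma2"
  unfolding Y_def sigma2_def by (rule integral_X_eq) auto

lemma sigma2_nonneg: "sigma2 \<ge> 0"
  unfolding sigma2_def by simp

definition T :: "nat \<Rightarrow> nat \<Rightarrow> 'a \<Rightarrow> real" where
  "T m k \<omega> = (\<Sum>i\<in>{m+1..m+k}. Y i \<omega>)"

lemma T_measurable[measurable]: "T m k \<in> borel_measurable M"
  unfolding T_def by measurable

lemma T_Suc: "T m (Suc k) \<omega> = T m k \<omega> + Y (m + k + 1) \<omega>"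
  unfolding T_def by (simp add: add.commute)

lemma T_add: "k \<le> K \<Longrightarrow> T m K \<omega> = T m k \<omega> + T (m + k) (K - k) \<omega>"
proof -
  assume "k \<le> K"
  then have "{m+1..m+K} = {m+1..m+k} \<union> {m+k+1..m+k+(K-k)}"
    and "{m+1..m+k} \<inter> {m+k+1..m+k+(K-k)} = {}" by auto
  then show ?thesis unfolding T_def by (simp add: sum.union_disjoint)
qed

lemma S_eq_T: "S X (m + k) \<omega> = S X m \<omega> + T m k \<omega> - real k * a"
proof (induction k)
  case (Suc k)
  have "S X (m + Suc k) \<omega> = S X (m + k) \<omega> + X (m + k + 1) \<omega>"
    unfolding S_def by simp
  then show ?case using Suc by (simp add: T_Suc Y_def algebra_simps)
qed (simp add: T_def)

lemma T_moments:
  "integrable M (T m k) \<and> (\<integral>\<omega>. T m k \<omega> \<partial>M) = 0 \<and>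
   integrable M (\<lambda>\<omega>. (T m k \<omega>)\<^sup>2) \<and> (\<integral>\<omega>. (T m k \<omega>)\<^sup>2 \<partial>M) = k * sigma2"
proof (induction k)
  case 0
  then show ?case by (simp add: T_def)
next
  case (Suc k)
  then have T: "integrable M (T m k)" "(\<integral>\<omega>. T m k \<omega> \<partial>M) = 0"
    "integrable M (\<lambda>\<omega>. (T m k \<omega>)\<^sup>2)" "(\<integral>\<omega>. (T m k \<omega>)\<^sup>2 \<partial>M) = k * sigma2"
    by auto
  let ?Y = "Y (m + k + 1)"
  have "indep_var borel ?Y borel (\<lambda>\<omega>. \<Sum>i\<in>{m+1..m+k}. Y i \<omega>)"
    by (rule indep_vars_sum[OF _ _ indep_vars_subset[OF Y_indep]]) auto
  then have indep: "indep_var borel ?Y borel (T m k)"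
    by (simp add: T_def[abs_def])
  have cross: "integrable M (\<lambda>\<omega>. ?Y \<omega> * T m k \<omega>)" "(\<integral>\<omega>. ?Y \<omega> * T m k \<omega> \<partial>M) = 0"
    using indep_var_integrable[OF indep] indep_var_lebesgue_integral[OF indep]
      integrable_Y[of "m + k + 1"] integral_Y[of "m + k + 1"] T by auto
  have Y: "integrable M ?Y" "(\<integral>\<omega>. ?Y \<omega> \<partial>M) = 0"
    "integrable M (\<lambda>\<omega>. (?Y \<omega>)\<^sup>2)" "(\<integral>\<omega>. (?Y \<omega>)\<^sup>2 \<partial>M) = sigma2"
    using integrable_Y integral_Y integrable_Y_square integral_Y_square by auto
  have square: "(\<lambda>\<omega>. (T m (Suc k) \<omega>)\<^sup>2) = (\<lambda>\<omega>. (T m k \<omega>)\<^sup>2 + 2 * (?Y \<omega> * T m k \<omega>) + (?Y \<omega>)\<^sup>2)"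
    by (simp add: T_Suc power2_sum algebra_simps)
  have "integrable M (T m (Suc k))" "(\<integral>\<omega>. T m (Suc k) \<omega> \<partial>M) = 0"
    unfolding T_Suc using T Y by simp_all
  moreover have "integrable M (\<lambda>\<omega>. (T m (Suc k) \<omega>)\<^sup>2)"
    unfolding square using T Y cross by simp
  moreover have "(\<integral>\<omega>. (T m (Suc k) \<omega>)\<^sup>2 \<partial>M) = Suc k * sigma2"
    unfolding square using T Y cross by (simp add: algebra_simps)
  ultimately show ?case by blast
qed

lemma integrable_T: "integrable M (T m k)"
  and integral_T: "(\<integral>\<omega>. T m k \<omega> \<partial>M) = 0"
  and integrable_T_square: "integrable M (\<lambda>\<omega>. (T m k \<omega>)\<^sup>2)"
  and integral_T_square: "(\<integral>\<omega>. (T m k \<omega>)\<^sup>2 \<partial>M) = k * sigma2"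
  using T_moments by auto

lemma T_restrict: "{m+1..m+j} \<subseteq> A \<Longrightarrow> (\<Sum>i\<in>{m+1..m+j}. (\<lambda>i\<in>A. Y i \<omega>) i) = T m j \<omega>"
  unfolding T_def by (intro sum.cong) auto

definition first_exit :: "nat \<Rightarrow> real \<Rightarrow> nat \<Rightarrow> 'a set" where
  "first_exit m lam k = {\<omega>\<in>space M. lam \<le> \<bar>T m k \<omega>\<bar> \<and> (\<forall>j\<in>{1..<k}. \<bar>T m j \<omega>\<bar> < lam)}"

lemma first_exit_sets[measurable]: "first_exit m lam k \<in> sets M"
  unfolding first_exit_def by measurable

lemma first_exit_disjoint: "disjoint_family_on (first_exit m lam) {1..}"
proof -
  have "first_exit m lam j \<inter> first_exit m lam k = {}" if "1 \<le> j" "j < k" for j k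
    using that by (force simp: first_exit_def)
  then show ?thesis
    unfolding disjoint_family_on_def by (metis Int_commute atLeast_iff linorder_neqE_nat)
qed

lemma first_exit_Union:
  "(\<Union>k\<in>{1..K}. first_exit m lam k) = {\<omega>\<in>space M. \<exists>k\<in>{1..K}. lam \<le> \<bar>T m k \<omega>\<bar>}"
proof (intro equalityI subsetI)
  fix \<omega> assume "\<omega> \<in> {\<omega>\<in>space M. \<exists>k\<in>{1..K}. lam \<le> \<bar>T m k \<omega>\<bar>}"
  then obtain k where \<omega>: "\<omega> \<in> space M" and k: "k \<in> {1..K}" "lam \<le> \<bar>T m k \<omega>\<bar>" by auto
  define k\<^sub>0 where "k\<^sub>0 = (LEAST k. 1 \<le> k \<and> lam \<le> \<bar>T m k \<omega>\<bar>)"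
  have "1 \<le> k\<^sub>0 \<and> lam \<le> \<bar>T m k\<^sub>0 \<omega>\<bar>"
    unfolding k\<^sub>0_def by (rule LeastI[of _ k]) (use k in auto)
  moreover have "k\<^sub>0 \<le> k"
    unfolding k\<^sub>0_def by (rule Least_le) (use k in auto)
  moreover have "\<bar>T m j \<omega>\<bar> < lam" if "j \<in> {1..<k\<^sub>0}" for j
    using not_less_Least[of j "\<lambda>k. 1 \<le> k \<and> lam \<le> \<bar>T m k \<omega>\<bar>"] that unfolding k\<^sub>0_def by auto
  ultimately show "\<omega> \<in> (\<Union>k\<in>{1..K}. first_exit m lam k)"
    using \<omega> k unfolding first_exit_def by auto
qed (auto simp: first_exit_def)

lemma first_exit_cross_term:
  shows integrable_first_exit_cross:
      "integrable M (\<lambda>\<omega>. T m k \<omega> * indicator (first_exit m lam k) \<omega> * T (m + k) l \<omega>)"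
    and integral_first_exit_cross:
      "(\<integral>\<omega>. T m k \<omega> * indicator (first_exit m lam k) \<omega> * T (m + k) l \<omega> \<partial>M) = 0"
proof -
  let ?A = "first_exit m lam k" and ?W = "T (m + k) l"
  let ?I = "{m+1..m+k}" and ?J = "{m+k+1..m+k+l}"
  \<comment> \<open>\<open>T m k * indicator ?A\<close> as a function of the block \<open>(Y i)\<^sub>i\<^sub>\<in>\<^sub>?\<^sub>I\<close>, which is independent of \<open>?W\<close>\<close>
  define f where "f h = (if lam \<le> \<bar>\<Sum>i\<in>?I. h i\<bar> \<and> (\<forall>j\<in>{1..<k}. \<bar>\<Sum>i\<in>{m+1..m+j}. h i\<bar> < lam)
                         then \<Sum>i\<in>?I. h i else 0)" for h :: "nat \<Rightarrow> real"
  have f_eq: "f (\<lambda>i\<in>?I. Y i \<omega>) = T m k \<omega> * indicator ?A \<omega>" if "\<omega> \<in> space M" for \<omega>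
    using that by (simp add: f_def first_exit_def T_def indicator_def)
  have "indep_var borel (\<lambda>\<omega>. f (\<lambda>i\<in>?I. Y i \<omega>)) borel (\<lambda>\<omega>. \<Sum>i\<in>?J. (\<lambda>i\<in>?J. Y i \<omega>) i)"
    by (rule indep_var_restrict_compose[OF Y_indep]) (auto simp: f_def)
  then have indep: "indep_var borel (\<lambda>\<omega>. f (\<lambda>i\<in>?I. Y i \<omega>)) borel ?W"
    using T_restrict[of "m + k" l ?J] by simp
  have int_TA: "integrable M (\<lambda>\<omega>. T m k \<omega> * indicator ?A \<omega>)"
    using integrable_real_mult_indicator[OF first_exit_sets integrable_T] .
  have int_f: "integrable M (\<lambda>\<omega>. f (\<lambda>i\<in>?I. Y i \<omega>))"
    by (rule Bochner_Integration.integrable_cong[THEN iffD2, OF refl _ int_TA]) (rule f_eq)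
  have prod: "f (\<lambda>i\<in>?I. Y i \<omega>) * ?W \<omega> = T m k \<omega> * indicator ?A \<omega> * ?W \<omega>"
    if "\<omega> \<in> space M" for \<omega>
    using f_eq[OF that] by simp
  show "integrable M (\<lambda>\<omega>. T m k \<omega> * indicator ?A \<omega> * ?W \<omega>)"
    using indep_var_integrable[OF indep int_f integrable_T]
    by (rule Bochner_Integration.integrable_cong[THEN iffD1, OF refl prod, rotated])
  have "(\<integral>\<omega>. T m k \<omega> * indicator ?A \<omega> * ?W \<omega> \<partial>M) = (\<integral>\<omega>. f (\<lambda>i\<in>?I. Y i \<omega>) * ?W \<omega> \<partial>M)"
    by (rule Bochner_Integration.integral_cong[OF refl prod[symmetric]])
  also have "\<dots> = 0"
    using indep_var_lebesgue_integral[OF indep int_f integrable_T] by (simp add: integral_T)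
  finally show "(\<integral>\<omega>. T m k \<omega> * indicator ?A \<omega> * ?W \<omega> \<partial>M) = 0" .
qed

lemma first_exit_step:
  assumes k: "k \<le> K" and lam: "lam > 0"
  shows "lam\<^sup>2 * prob (first_exit m lam k) \<le> (\<integral>\<omega>. (T m K \<omega>)\<^sup>2 * indicator (first_exit m lam k) \<omega> \<partial>M)"
proof -
  let ?A = "first_exit m lam k" and ?W = "T (m + k) (K - k)"
  have int_Tk: "integrable M (\<lambda>\<omega>. (T m k \<omega>)\<^sup>2 * indicator ?A \<omega>)"
    and int_TK: "integrable M (\<lambda>\<omega>. (T m K \<omega>)\<^sup>2 * indicator ?A \<omega>)"
    using integrable_real_mult_indicator[OF first_exit_sets integrable_T_square] by auto
  note cross = integrable_first_exit_cross[of m k lam "K - k"] integral_first_exit_cross[of m k lam "K - k"]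
  have "lam\<^sup>2 * prob ?A = (\<integral>\<omega>. lam\<^sup>2 * indicator ?A \<omega> \<partial>M)"
    by simp
  also have "\<dots> \<le> (\<integral>\<omega>. (T m k \<omega>)\<^sup>2 * indicator ?A \<omega> \<partial>M)"
  proof (rule integral_mono[OF _ int_Tk])
    show "integrable M (\<lambda>\<omega>. lam\<^sup>2 * indicator ?A \<omega>)"
      by (simp add: emeasure_finite less_top[symmetric])
    show "lam\<^sup>2 * indicator ?A \<omega> \<le> (T m k \<omega>)\<^sup>2 * indicator ?A \<omega>" for \<omega>
    proof (cases "\<omega> \<in> ?A")
      case True
      then have "lam\<^sup>2 \<le> \<bar>T m k \<omega>\<bar>\<^sup>2"
        using lam by (intro power_mono) (auto simp: first_exit_def)
      then show ?thesis
        by (intro mult_right_mono) simp_all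
    qed simp
  qed
  also have "\<dots> = (\<integral>\<omega>. (T m k \<omega>)\<^sup>2 * indicator ?A \<omega> + 2 * (T m k \<omega> * indicator ?A \<omega> * ?W \<omega>) \<partial>M)"
    using int_Tk cross by simp
  also have "\<dots> \<le> (\<integral>\<omega>. (T m K \<omega>)\<^sup>2 * indicator ?A \<omega> \<partial>M)"
  proof (rule integral_mono[OF _ int_TK])
    show "integrable M (\<lambda>\<omega>. (T m k \<omega>)\<^sup>2 * indicator ?A \<omega> + 2 * (T m k \<omega> * indicator ?A \<omega> * ?W \<omega>))"
      using int_Tk cross by simp
    show "(T m k \<omega>)\<^sup>2 * indicator ?A \<omega> + 2 * (T m k \<omega> * indicator ?A \<omega> * ?W \<omega>)
          \<le> (T m K \<omega>)\<^sup>2 * indicator ?A \<omega>" for \<omega>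
      \<comment> \<open>the dropped term is \<open>?W\<^sup>2 * indicator ?A \<ge> 0\<close>\<close>
      using T_add[OF k, of m \<omega>] by (simp add: indicator_def power2_sum)
  qed
  finally show ?thesis .
qed

theorem kolmogorov_inequality:
  assumes lam: "lam > 0"
  shows "prob {\<omega>\<in>space M. \<exists>k\<in>{1..K}. lam \<le> \<bar>T m k \<omega>\<bar>} \<le> K * sigma2 / lam\<^sup>2"
proof -
  let ?A = "first_exit m lam"
  have disj: "disjoint_family_on ?A {1..K}"
    using first_exit_disjoint by (rule disjoint_family_on_mono[rotated]) auto
  have "prob {\<omega>\<in>space M. \<exists>k\<in>{1..K}. lam \<le> \<bar>T m k \<omega>\<bar>} = prob (\<Union>k\<in>{1..K}. ?A k)"
    by (simp only: first_exit_Union)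
  also have "\<dots> = (\<Sum>k\<in>{1..K}. prob (?A k))"
    by (rule measure_finite_Union[OF _ _ disj]) (auto simp: emeasure_finite)
  finally have "lam\<^sup>2 * prob {\<omega>\<in>space M. \<exists>k\<in>{1..K}. lam \<le> \<bar>T m k \<omega>\<bar>}
      = (\<Sum>k\<in>{1..K}. lam\<^sup>2 * prob (?A k))"
    by (simp add: sum_distrib_left)
  also have "\<dots> \<le> (\<Sum>k\<in>{1..K}. \<integral>\<omega>. (T m K \<omega>)\<^sup>2 * indicator (?A k) \<omega> \<partial>M)"
    by (intro sum_mono first_exit_step lam) simp
  also have "\<dots> = (\<integral>\<omega>. (\<Sum>k\<in>{1..K}. (T m K \<omega>)\<^sup>2 * indicator (?A k) \<omega>) \<partial>M)"
    by (rule Bochner_Integration.integral_sum[symmetric])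
      (intro integrable_real_mult_indicator first_exit_sets integrable_T_square)
  also have "\<dots> = (\<integral>\<omega>. (T m K \<omega>)\<^sup>2 * indicator (\<Union>k\<in>{1..K}. ?A k) \<omega> \<partial>M)"
    unfolding indicator_UN_disjoint[OF finite_atLeastAtMost disj] by (simp add: sum_distrib_left)
  also have "\<dots> \<le> (\<integral>\<omega>. (T m K \<omega>)\<^sup>2 \<partial>M)"
    by (intro integral_mono integrable_real_mult_indicator integrable_T_square)
      (auto simp: indicator_def)
  also have "\<dots> = K * sigma2"
    by (rule integral_T_square)
  finally show ?thesis
    using lam by (simp add: pos_le_divide_eq mult.commute)
qed

lemma S_measurable[measurable]: "S X n \<in> borel_measurable M"
  unfolding S_def by measurable

lemma pred_tau_eq_enat[measurable]: "Measurable.pred M (\<lambda>\<omega>. tau X \<omega> = enat t)"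
  unfolding tau_eq_enat_iff by measurable

lemma pred_tau_eq_infinity[measurable]: "Measurable.pred M (\<lambda>\<omega>. tau X \<omega> = \<infinity>)"
  unfolding tau_eq_infinity_iff by measurable

lemma pred_tau_gt[measurable]: "Measurable.pred M (\<lambda>\<omega>. enat n < tau X \<omega>)"
  unfolding tau_gt_iff by measurable

lemma tau_measurable: "tau X \<in> measurable M (count_space UNIV)"
proof (subst measurable_count_space_eq_countable)
  have "tau X -` {t} \<inter> space M \<in> sets M" for t
    by (cases t) (simp_all add: vimage_def Int_def conj_commute)
  then show "tau X \<in> space M \<rightarrow> UNIV \<and> (\<forall>t\<in>UNIV. tau X -` {t} \<inter> space M \<in> sets M)"
    by simp
qed simp

lemma A_tau_gt_sets: "x \<ge> 0 \<Longrightarrow> {\<omega>\<in>space M. x < A_tau X \<omega>} \<in> sets M"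
  by (simp only: A_tau_gt_iff) measurable

lemma nn_integral_tau:
  "(\<integral>\<^sup>+\<omega>. ennreal_of_enat (tau X \<omega>) \<partial>M) = (\<Sum>n. ennreal (prob {\<omega>\<in>space M. enat n < tau X \<omega>}))"
  by (simp add: nn_integral_enat_function[OF tau_measurable] emeasure_eq_measure)

text \<open>A positive drift of \<open>S\<^sub>n\<close> for \<open>n\<close> steps forces a centred deviation of size \<open>n a\<close>, whose
  probability is \<open>O(1/n)\<close> by Kolmogorov's inequality.\<close>
lemma prob_tau_infinity: "prob {\<omega>\<in>space M. tau X \<omega> = \<infinity>} = 0"
proof -
  let ?p = "prob {\<omega>\<in>space M. tau X \<omega> = \<infinity>}"
  have bound: "?p \<le> sigma2 / (n * a\<^sup>2)" if n: "n \<ge> 1" for n :: nat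
  proof -
    have "{\<omega>\<in>space M. tau X \<omega> = \<infinity>} \<subseteq> {\<omega>\<in>space M. \<exists>k\<in>{1..n}. n * a \<le> \<bar>T 0 k \<omega>\<bar>}"
    proof safe
      fix \<omega> assume "\<omega> \<in> space M" "tau X \<omega> = \<infinity>"
      then have "S X n \<omega> > 0"
        using n by (auto simp: tau_eq_infinity_iff)
      then have "n * a \<le> \<bar>T 0 n \<omega>\<bar>"
        using S_eq_T[of 0 n \<omega>] by simp
      then show "\<exists>k\<in>{1..n}. n * a \<le> \<bar>T 0 k \<omega>\<bar>"
        using n by auto
    qed
    then have "?p \<le> prob {\<omega>\<in>space M. \<exists>k\<in>{1..n}. n * a \<le> \<bar>T 0 k \<omega>\<bar>}"
      by (intro finite_measure_mono) measurable
    also have "\<dots> \<le> n * sigma2 / (n * a)\<^sup>2"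
      using n a_pos by (intro kolmogorov_inequality) simp
    also have "\<dots> = sigma2 / (n * a\<^sup>2)"
      using n by (simp add: power2_eq_square)
    finally show ?thesis .
  qed
  show ?thesis
  proof (rule ccontr)
    assume "?p \<noteq> 0"
    then have p: "?p > 0"
      using measure_nonneg[of M] by (simp add: less_le)
    obtain n :: nat where n: "sigma2 / (a\<^sup>2 * ?p) < n"
      using reals_Archimedean2 by blast
    moreover have "0 \<le> sigma2 / (a\<^sup>2 * ?p)"
      using sigma2_nonneg p by simp
    ultimately have n1: "n \<ge> 1"
      by (cases n) auto
    have "sigma2 < n * (a\<^sup>2 * ?p)"
      using n p a_pos by (simp add: divide_less_eq mult.commute)
    then have "sigma2 / (n * a\<^sup>2) < ?p"
      using n1 a_pos by (simp add: divide_less_eq mult.commute mult.left_commute)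
    then show False
      using bound[OF n1] by simp
  qed
qed

definition big_jump :: "nat \<Rightarrow> real \<Rightarrow> real \<Rightarrow> nat \<Rightarrow> 'a set" where
  "big_jump n y lam K = {\<omega>\<in>space M. (\<forall>j\<in>{1..n}. 0 < S X j \<omega> \<and> X j \<omega> \<le> y) \<and>
     y < X (Suc n) \<omega> \<and> (\<forall>k\<in>{1..K}. \<bar>T (Suc n) k \<omega>\<bar> < lam)}"

lemma big_jump_sets[measurable]: "big_jump n y lam K \<in> sets M"
  unfolding big_jump_def by measurable

lemma big_jump_disjoint: "disjoint_family (\<lambda>n. big_jump n y lam K)"
proof -
  have "big_jump n\<^sub>1 y lam K \<inter> big_jump n\<^sub>2 y lam K = {}" if "n\<^sub>1 < n\<^sub>2" for n\<^sub>1 n\<^sub>2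
  proof (rule equals0I)
    fix \<omega> assume "\<omega> \<in> big_jump n\<^sub>1 y lam K \<inter> big_jump n\<^sub>2 y lam K"
    then have "y < X (Suc n\<^sub>1) \<omega>" "\<forall>j\<in>{1..n\<^sub>2}. X j \<omega> \<le> y"
      unfolding big_jump_def by auto
    moreover have "Suc n\<^sub>1 \<in> {1..n\<^sub>2}"
      using that by simp
    ultimately show False
      by fastforce
  qed
  then show ?thesis
    unfolding disjoint_family_on_def by (metis Int_commute linorder_neqE_nat)
qed

lemma prob_big_jump:
  "prob (big_jump n y lam K) =
     prob {\<omega>\<in>space M. \<forall>j\<in>{1..n}. 0 < S X j \<omega> \<and> X j \<omega> \<le> y} * Fbar M X y *
     prob {\<omega>\<in>space M. \<forall>k\<in>{1..K}. \<bar>T (Suc n) k \<omega>\<bar> < lam}"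
proof -
  define P where "P h \<longleftrightarrow> (\<forall>j\<in>{1..n}. 0 < (\<Sum>i\<in>{1..j}. h i) \<and> h j \<le> y)" for h :: "nat \<Rightarrow> real"
  define Q where "Q h \<longleftrightarrow> y < h (Suc n)" for h :: "nat \<Rightarrow> real"
  define R where "R h \<longleftrightarrow> (\<forall>k\<in>{1..K}. \<bar>\<Sum>i\<in>{Suc n + 1..Suc n + k}. h i + a\<bar> < lam)"
    for h :: "nat \<Rightarrow> real"
  let ?X = "\<lambda>A \<omega>. \<lambda>i\<in>A. X i \<omega>"
  have P_eq: "P (?X {1..n} \<omega>) \<longleftrightarrow> (\<forall>j\<in>{1..n}. 0 < S X j \<omega> \<and> X j \<omega> \<le> y)" for \<omega>
    by (auto simp: P_def S_def)
  have Q_eq: "Q (?X A \<omega>) \<longleftrightarrow> y < X (Suc n) \<omega>" if "Suc n \<in> A" for A \<omega>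
    using that by (simp add: Q_def)
  have R_eq: "R (?X A \<omega>) \<longleftrightarrow> (\<forall>k\<in>{1..K}. \<bar>T (Suc n) k \<omega>\<bar> < lam)"
    if A: "{Suc (Suc n)..Suc n + K} \<subseteq> A" for A \<omega>
  proof -
    have sum_eq: "(\<Sum>i\<in>{Suc n + 1..Suc n + k}. ?X A \<omega> i + a) = T (Suc n) k \<omega>" if "k \<le> K" for k
      using that A by (subst sum_restrict_subset[where f="\<lambda>x. x + a"]) (auto simp: T_def Y_def)
    show ?thesis
      unfolding R_def by (intro ball_cong refl) (subst sum_eq, auto)
  qed
  have Q_R: "Q (?X {Suc n..Suc n + K} \<omega>) \<longleftrightarrow> y < X (Suc n) \<omega>"
    "Q (?X {Suc n} \<omega>) \<longleftrightarrow> y < X (Suc n) \<omega>"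
    "R (?X {Suc n..Suc n + K} \<omega>) \<longleftrightarrow> (\<forall>k\<in>{1..K}. \<bar>T (Suc n) k \<omega>\<bar> < lam)"
    "R (?X {Suc (Suc n)..Suc n + K} \<omega>) \<longleftrightarrow> (\<forall>k\<in>{1..K}. \<bar>T (Suc n) k \<omega>\<bar> < lam)" for \<omega>
    by (simp_all add: Q_eq R_eq)
  have pred_P: "Measurable.pred (PiM {1..n} (\<lambda>_. borel)) P"
    and pred_QR: "Measurable.pred (PiM {Suc n..Suc n + K} (\<lambda>_. borel)) (\<lambda>h. Q h \<and> R h)"
    and pred_Q: "Measurable.pred (PiM {Suc n} (\<lambda>_. borel)) Q"
    and pred_R: "Measurable.pred (PiM {Suc (Suc n)..Suc n + K} (\<lambda>_. borel)) R"
    unfolding P_def Q_def R_def by measurable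
  have "prob {\<omega>\<in>space M. P (?X {1..n} \<omega>) \<and> (\<lambda>h. Q h \<and> R h) (?X {Suc n..Suc n + K} \<omega>)} =
    prob {\<omega>\<in>space M. P (?X {1..n} \<omega>)} *
    prob {\<omega>\<in>space M. Q (?X {Suc n..Suc n + K} \<omega>) \<and> R (?X {Suc n..Suc n + K} \<omega>)}"
    by (rule prob_restrict_indep[OF X_indep _ _ _ pred_P pred_QR]) auto
  moreover have "prob {\<omega>\<in>space M. Q (?X {Suc n} \<omega>) \<and> R (?X {Suc (Suc n)..Suc n + K} \<omega>)} =
    prob {\<omega>\<in>space M. Q (?X {Suc n} \<omega>)} * prob {\<omega>\<in>space M. R (?X {Suc (Suc n)..Suc n + K} \<omega>)}"
    by (rule prob_restrict_indep[OF X_indep _ _ _ pred_Q pred_R]) auto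
  moreover have "prob {\<omega>\<in>space M. y < X (Suc n) \<omega>} = Fbar M X y"
    by (rule prob_X_gt) simp
  ultimately show ?thesis
    unfolding P_eq Q_R big_jump_def by (simp only: mult.assoc)
qed

lemma prob_no_early_jump:
  "prob {\<omega>\<in>space M. enat n < tau X \<omega>} - n * Fbar M X y \<le>
     prob {\<omega>\<in>space M. \<forall>j\<in>{1..n}. 0 < S X j \<omega> \<and> X j \<omega> \<le> y}"
proof -
  let ?H = "{\<omega>\<in>space M. \<forall>j\<in>{1..n}. 0 < S X j \<omega> \<and> X j \<omega> \<le> y}"
  let ?U = "\<Union>j\<in>{1..n}. {\<omega>\<in>space M. y < X j \<omega>}"
  have "{\<omega>\<in>space M. enat n < tau X \<omega>} \<subseteq> ?H \<union> ?U"
    by (auto simp: tau_gt_iff not_le)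
  then have "prob {\<omega>\<in>space M. enat n < tau X \<omega>} \<le> prob (?H \<union> ?U)"
    by (intro finite_measure_mono) measurable
  also have "\<dots> \<le> prob ?H + prob ?U"
    by (intro measure_Un_le) measurable
  also have "prob ?U \<le> (\<Sum>j\<in>{1..n}. prob {\<omega>\<in>space M. y < X j \<omega>})"
    by (intro measure_UNION_le) measurable
  also have "\<dots> = n * Fbar M X y"
    by (simp add: prob_X_gt)
  finally show ?thesis
    by simp
qed

lemma prob_T_small:
  assumes "lam > 0"
  shows "1 - K * sigma2 / lam\<^sup>2 \<le> prob {\<omega>\<in>space M. \<forall>k\<in>{1..K}. \<bar>T m k \<omega>\<bar> < lam}"
proof -
  have "{\<omega>\<in>space M. \<forall>k\<in>{1..K}. \<bar>T m k \<omega>\<bar> < lam} =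
      space M - {\<omega>\<in>space M. \<exists>k\<in>{1..K}. lam \<le> \<bar>T m k \<omega>\<bar>}"
    by (auto simp: not_le)
  then have "prob {\<omega>\<in>space M. \<forall>k\<in>{1..K}. \<bar>T m k \<omega>\<bar> < lam} =
      1 - prob {\<omega>\<in>space M. \<exists>k\<in>{1..K}. lam \<le> \<bar>T m k \<omega>\<bar>}"
    by (simp add: prob_compl)
  then show ?thesis
    using kolmogorov_inequality[OF assms, of K m] by simp
qed

lemma A_tau_gt_on_big_jump:
  assumes \<omega>: "\<omega> \<in> big_jump n (z + lam) lam (nat \<lfloor>z / a\<rfloor>)" and finite: "tau X \<omega> \<noteq> \<infinity>"
    and z: "z \<ge> 0" and lam: "lam > 0"
  shows "z\<^sup>2 / (2 * a) < A_tau X \<omega>"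
proof -
  define K where "K = nat \<lfloor>z / a\<rfloor>"
  have early: "\<forall>j\<in>{1..n}. 0 < S X j \<omega>" and jump: "z + lam < X (Suc n) \<omega>"
    and close: "\<forall>k\<in>{1..K}. \<bar>T (Suc n) k \<omega>\<bar> < lam"
    using \<omega> unfolding big_jump_def K_def by auto
  have "0 \<le> S X n \<omega>"
  proof (cases "n = 0")
    case False
    then have "n \<in> {1..n}" by simp
    then show ?thesis using early by (meson less_imp_le)
  qed simp
  then have S_jump: "z + lam < S X (Suc n) \<omega>"
    using jump by (simp add: S_Suc)
  have above: "z - real k * a < S X (Suc n + k) \<omega>" if "k \<le> K" for k
  proof -
    have "- lam < T (Suc n) k \<omega>"
    proof (cases "k = 0")
      case False
      then have "\<bar>T (Suc n) k \<omega>\<bar> < lam"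
        using close that by simp
      then show ?thesis by simp
    qed (simp add: T_def lam)
    then show ?thesis
      using S_eq_T[of "Suc n" k \<omega>] S_jump by simp
  qed
  have "real K * a \<le> z"
    using z a_pos by (simp add: K_def of_nat_nat pos_le_divide_eq[symmetric])
  then have after: "0 < S X (Suc n + k) \<omega>" if "k \<le> K" for k
  proof -
    have "real k * a \<le> real K * a"
      using that a_pos by (intro mult_right_mono) simp_all
    then show ?thesis
      using above[OF that] \<open>real K * a \<le> z\<close> by linarith
  qed
  have positive: "\<forall>j\<in>{1..Suc n + K}. 0 < S X j \<omega>"
  proof
    fix j assume j: "j \<in> {1..Suc n + K}"
    show "0 < S X j \<omega>"
    proof (cases "j \<le> n")
      case True
      then show ?thesis using early j by auto
    next
      case False
      then show ?thesis
        using after[of "j - Suc n"] j by simp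
    qed
  qed
  have "z\<^sup>2 / (2 * a) \<le> (\<Sum>k\<le>K. z - real k * a)"
    unfolding K_def using z a_pos by (rule sum_arith_progression_ge)
  also have "\<dots> < (\<Sum>k\<le>K. S X (Suc n + k) \<omega>)"
    using above by (intro sum_strict_mono) auto
  also have "\<dots> = (\<Sum>j\<in>(\<lambda>k. Suc n + k) ` {..K}. S X j \<omega>)"
    by (subst sum.reindex) (auto simp: inj_on_def)
  also have "\<dots> \<le> A_tau X \<omega>"
    using finite positive by (rule sum_le_A_tau) auto
  finally show ?thesis .
qed

lemma prob_big_jump_ge:
  assumes lam: "lam > 0" and K: "K * sigma2 \<le> lam\<^sup>2"
  shows "(prob {\<omega>\<in>space M. enat n < tau X \<omega>} - n * Fbar M X y) * (Fbar M X y * (1 - K * sigma2 / lam\<^sup>2))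
    \<le> prob (big_jump n y lam K)"
proof -
  let ?H = "{\<omega>\<in>space M. \<forall>j\<in>{1..n}. 0 < S X j \<omega> \<and> X j \<omega> \<le> y}"
  have F: "0 \<le> Fbar M X y" and \<delta>: "0 \<le> 1 - K * sigma2 / lam\<^sup>2"
    using K lam by (simp_all add: Fbar_def)
  have "(prob {\<omega>\<in>space M. enat n < tau X \<omega>} - n * Fbar M X y) * (Fbar M X y * (1 - K * sigma2 / lam\<^sup>2))
      \<le> prob ?H * (Fbar M X y * (1 - K * sigma2 / lam\<^sup>2))"
    using prob_no_early_jump F \<delta> by (intro mult_right_mono) auto
  also have "\<dots> \<le> prob ?H * (Fbar M X y * prob {\<omega>\<in>space M. \<forall>k\<in>{1..K}. \<bar>T (Suc n) k \<omega>\<bar> < lam})"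
    using prob_T_small[OF lam] F by (intro mult_left_mono) auto
  also have "\<dots> = prob (big_jump n y lam K)"
    by (simp add: prob_big_jump mult.assoc)
  finally show ?thesis .
qed

lemma prob_Union_big_jump_le:
  assumes z: "z \<ge> 0" and lam: "lam > 0"
  shows "prob (\<Union>n<N. big_jump n (z + lam) lam (nat \<lfloor>z / a\<rfloor>)) \<le> prob {\<omega>\<in>space M. z\<^sup>2 / (2 * a) < A_tau X \<omega>}"
proof -
  let ?A = "{\<omega>\<in>space M. z\<^sup>2 / (2 * a) < A_tau X \<omega>}"
  have A: "?A \<in> sets M"
    using z a_pos by (intro A_tau_gt_sets) simp
  have "(\<Union>n<N. big_jump n (z + lam) lam (nat \<lfloor>z / a\<rfloor>)) \<subseteq> ?A \<union> {\<omega>\<in>space M. tau X \<omega> = \<infinity>}"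
    using A_tau_gt_on_big_jump[OF _ _ z lam] by (auto simp: big_jump_def)
  then have "prob (\<Union>n<N. big_jump n (z + lam) lam (nat \<lfloor>z / a\<rfloor>)) \<le> prob (?A \<union> {\<omega>\<in>space M. tau X \<omega> = \<infinity>})"
    using A by (intro finite_measure_mono) auto
  also have "\<dots> \<le> prob ?A + prob {\<omega>\<in>space M. tau X \<omega> = \<infinity>}"
    using A by (intro measure_Un_le) auto
  finally show ?thesis
    by (simp add: prob_tau_infinity)
qed

lemma area_tail_lower_bound:
  fixes x lam :: real and N :: nat
  defines "z \<equiv> sqrt (2 * a * x)"
  defines "K \<equiv> nat \<lfloor>z / a\<rfloor>" and "F \<equiv> Fbar M X (z + lam)"
  assumes x: "x \<ge> 0" and lam: "lam > 0" and K: "K * sigma2 \<le> lam\<^sup>2"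
  shows "F * (1 - K * sigma2 / lam\<^sup>2) * ((\<Sum>n<N. prob {\<omega>\<in>space M. enat n < tau X \<omega>}) - real N ^ 2 * F)
    \<le> prob {\<omega>\<in>space M. x < A_tau X \<omega>}"
proof -
  let ?E = "\<lambda>n. big_jump n (z + lam) lam K"
  let ?p = "\<lambda>n. prob {\<omega>\<in>space M. enat n < tau X \<omega>}"
  define \<delta> where "\<delta> = K * sigma2 / lam\<^sup>2"
  have F: "0 \<le> F" and \<delta>: "0 \<le> 1 - \<delta>"
    using K lam by (simp_all add: F_def Fbar_def \<delta>_def)
  have "(\<Sum>n<N. real n * F) \<le> real N ^ 2 * F"
    using sum_mono[of "{..<N}" "\<lambda>n. real n * F" "\<lambda>_. real N * F"] F
    by (simp add: power2_eq_square mult_right_mono)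
  then have "F * (1 - \<delta>) * ((\<Sum>n<N. ?p n) - real N ^ 2 * F) \<le> F * (1 - \<delta>) * (\<Sum>n<N. ?p n - n * F)"
    using F \<delta> by (intro mult_left_mono) (auto simp: sum_subtractf)
  also have "\<dots> = (\<Sum>n<N. (?p n - n * F) * (F * (1 - \<delta>)))"
    by (simp add: sum_distrib_left mult_ac)
  also have "\<dots> \<le> (\<Sum>n<N. prob (?E n))"
    unfolding F_def \<delta>_def using lam K by (intro sum_mono prob_big_jump_ge)
  also have "\<dots> = prob (\<Union>n<N. ?E n)"
    using big_jump_disjoint
    by (intro measure_finite_Union[symmetric]) (auto simp: emeasure_finite intro: disjoint_family_on_mono)
  also have "\<dots> \<le> prob {\<omega>\<in>space M. z\<^sup>2 / (2 * a) < A_tau X \<omega>}"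
    unfolding K_def using lam x a_pos by (intro prob_Union_big_jump_le) (simp_all add: z_def)
  also have "z\<^sup>2 / (2 * a) = x"
    using x a_pos by (simp add: z_def)
  finally show ?thesis
    unfolding \<delta>_def .
qed

lemma Fbar_le_second_moment: "y > 0 \<Longrightarrow> Fbar M X y \<le> (\<integral>\<omega>. (X 1 \<omega>)\<^sup>2 \<partial>M) / y\<^sup>2"
proof -
  assume y: "y > 0"
  have "Fbar M X y \<le> prob {\<omega>\<in>space M. y\<^sup>2 \<le> (X 1 \<omega>)\<^sup>2}"
    unfolding Fbar_def using y by (intro finite_measure_mono) (auto intro!: power_mono)
  also have "\<dots> \<le> (\<integral>\<omega>. (X 1 \<omega>)\<^sup>2 \<partial>M) / y\<^sup>2"
    using y by (intro integral_Markov_inequality_measure[OF X_square_integrable]) auto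
  finally show ?thesis .
qed

lemma tendsto_kolmogorov_bound:
  assumes "\<epsilon> > 0"
  shows "((\<lambda>x. real (nat \<lfloor>sqrt (2 * a * x) / a\<rfloor>) * sigma2 / (x powr (1/4 + \<epsilon>))\<^sup>2) \<longlongrightarrow> 0) at_top"
proof (rule tendsto_sandwich)
  show "\<forall>\<^sub>F x in at_top. 0 \<le> real (nat \<lfloor>sqrt (2 * a * x) / a\<rfloor>) * sigma2 / (x powr (1/4 + \<epsilon>))\<^sup>2"
    using sigma2_nonneg by simp
  show "\<forall>\<^sub>F x in at_top. real (nat \<lfloor>sqrt (2 * a * x) / a\<rfloor>) * sigma2 / (x powr (1/4 + \<epsilon>))\<^sup>2
      \<le> sigma2 * (sqrt (2 * a) / a) * x powr (- (2 * \<epsilon>))"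
    using eventually_gt_at_top[of 0]
  proof eventually_elim
    case (elim x)
    have "real (nat \<lfloor>sqrt (2 * a * x) / a\<rfloor>) \<le> sqrt (2 * a * x) / a"
      using a_pos elim by (simp add: of_nat_nat)
    then have "real (nat \<lfloor>sqrt (2 * a * x) / a\<rfloor>) * sigma2 / (x powr (1/4 + \<epsilon>))\<^sup>2
        \<le> sqrt (2 * a * x) / a * sigma2 / (x powr (1/4 + \<epsilon>))\<^sup>2"
      using sigma2_nonneg by (intro divide_right_mono mult_right_mono) auto
    also have "\<dots> = sigma2 * (sqrt (2 * a) / a) * (x powr (1/2) / x powr (1/2 + 2 * \<epsilon>))"
      using elim a_pos
      by (simp add: real_sqrt_mult powr_half_sqrt powr_powr[symmetric] power2_eq_square
          powr_add[symmetric])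
    also have "x powr (1/2) / x powr (1/2 + 2 * \<epsilon>) = x powr (- (2 * \<epsilon>))"
      by (simp add: powr_diff[symmetric])
    finally show ?case .
  qed
  have "((\<lambda>x. x powr (- (2 * \<epsilon>))) \<longlongrightarrow> 0) at_top"
    using assms by (intro tendsto_neg_powr filterlim_ident) auto
  from tendsto_mult_left[OF this, of "sigma2 * (sqrt (2 * a) / a)"]
  show "((\<lambda>x. sigma2 * (sqrt (2 * a) / a) * x powr (- (2 * \<epsilon>))) \<longlongrightarrow> 0) at_top"
    by simp
qed simp

lemma tendsto_Fbar_shifted:
  assumes "\<epsilon> > 0"
  shows "((\<lambda>x. Fbar M X (sqrt (2 * a * x) + x powr (1/4 + \<epsilon>))) \<longlongrightarrow> 0) at_top"
proof (rule tendsto_sandwich)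
  define m2 where "m2 = (\<integral>\<omega>. (X 1 \<omega>)\<^sup>2 \<partial>M)"
  show "\<forall>\<^sub>F x in at_top. 0 \<le> Fbar M X (sqrt (2 * a * x) + x powr (1/4 + \<epsilon>))"
    by (simp add: Fbar_def)
  show "\<forall>\<^sub>F x in at_top. Fbar M X (sqrt (2 * a * x) + x powr (1/4 + \<epsilon>)) \<le> m2 * x powr (- (1/2 + 2 * \<epsilon>))"
    using eventually_gt_at_top[of 0]
  proof eventually_elim
    case (elim x)
    let ?lam = "x powr (1/4 + \<epsilon>)"
    have lam: "0 < ?lam" "?lam \<le> sqrt (2 * a * x) + ?lam"
      using elim a_pos by simp_all
    then have y: "0 < sqrt (2 * a * x) + ?lam"
      by linarith
    have "Fbar M X (sqrt (2 * a * x) + ?lam) \<le> m2 / (sqrt (2 * a * x) + ?lam)\<^sup>2"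
      unfolding m2_def using y by (rule Fbar_le_second_moment)
    also have "\<dots> \<le> m2 / ?lam\<^sup>2"
    proof (rule divide_left_mono)
      show "?lam\<^sup>2 \<le> (sqrt (2 * a * x) + ?lam)\<^sup>2"
        using lam by (intro power_mono) auto
      show "0 < (sqrt (2 * a * x) + ?lam)\<^sup>2 * ?lam\<^sup>2"
        by (intro mult_pos_pos zero_less_power y lam(1))
    qed (simp add: m2_def)
    also have "?lam\<^sup>2 = x powr (1/2 + 2 * \<epsilon>)"
      using elim by (simp add: powr_powr[symmetric] power2_eq_square powr_add[symmetric])
    also have "m2 / x powr (1/2 + 2 * \<epsilon>) = m2 * x powr (- (1/2 + 2 * \<epsilon>))"
      by (simp only: powr_minus divide_inverse)
    finally show ?case .
  qed
  have "((\<lambda>x. x powr (- (1/2 + 2 * \<epsilon>))) \<longlongrightarrow> 0) at_top"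
    using assms by (intro tendsto_neg_powr filterlim_ident) auto
  from tendsto_mult_left[OF this, of m2]
  show "((\<lambda>x. m2 * x powr (- (1/2 + 2 * \<epsilon>))) \<longlongrightarrow> 0) at_top"
    by simp
qed simp

theorem area_tail_asymptotic:
  assumes \<epsilon>: "\<epsilon> > 0" and c: "ennreal c < (\<integral>\<^sup>+\<omega>. ennreal_of_enat (tau X \<omega>) \<partial>M)"
  shows "\<forall>\<^sub>F x in at_top. c * Fbar M X (sqrt (2 * a * x) + x powr (1/4 + \<epsilon>))
    \<le> prob {\<omega>\<in>space M. x < A_tau X \<omega>}"
proof (cases "c \<le> 0")
  case True
  then show ?thesis
    by (intro always_eventually allI order.trans[OF mult_nonpos_nonneg]) (auto simp: Fbar_def)
next
  case False
  define p where "p n = prob {\<omega>\<in>space M. enat n < tau X \<omega>}" for n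
  have "ennreal c < (SUP N. \<Sum>n<N. ennreal (p n))"
    using c unfolding nn_integral_tau p_def by (simp add: suminf_eq_SUP)
  then obtain N where "ennreal c < (\<Sum>n<N. ennreal (p n))"
    by (auto simp: less_SUP_iff)
  then have c_lt: "c < (\<Sum>n<N. p n)"
    using False by (simp add: p_def ennreal_less_iff)
  define \<delta> where "\<delta> x = real (nat \<lfloor>sqrt (2 * a * x) / a\<rfloor>) * sigma2 / (x powr (1/4 + \<epsilon>))\<^sup>2" for x
  define F where "F x = Fbar M X (sqrt (2 * a * x) + x powr (1/4 + \<epsilon>))" for x
  have "((\<lambda>x. (1 - \<delta> x) * ((\<Sum>n<N. p n) - real N ^ 2 * F x)) \<longlongrightarrow> (1 - 0) * ((\<Sum>n<N. p n) - real N ^ 2 * 0)) at_top"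
    unfolding \<delta>_def F_def using \<epsilon>
    by (intro tendsto_intros tendsto_kolmogorov_bound tendsto_Fbar_shifted)
  then have "\<forall>\<^sub>F x in at_top. c < (1 - \<delta> x) * ((\<Sum>n<N. p n) - real N ^ 2 * F x)"
    using c_lt by (intro order_tendstoD(1)) auto
  moreover have "\<forall>\<^sub>F x in at_top. \<delta> x < 1"
    using order_tendstoD(2)[OF tendsto_kolmogorov_bound[OF \<epsilon>], of 1] unfolding \<delta>_def by simp
  ultimately show ?thesis
    using eventually_gt_at_top[of 0]
  proof eventually_elim
    case (elim x)
    have "c * F x \<le> ((1 - \<delta> x) * ((\<Sum>n<N. p n) - real N ^ 2 * F x)) * F x"
      using elim(1) by (intro mult_right_mono) (auto simp: F_def Fbar_def)
    also have "\<dots> = F x * (1 - \<delta> x) * ((\<Sum>n<N. p n) - real N ^ 2 * F x)"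
      by (simp only: mult_ac)
    also have "\<dots> \<le> prob {\<omega>\<in>space M. x < A_tau X \<omega>}"
    proof -
      have lam: "0 < x powr (1/4 + \<epsilon>)"
        using elim by simp
      then have K: "real (nat \<lfloor>sqrt (2 * a * x) / a\<rfloor>) * sigma2 \<le> (x powr (1/4 + \<epsilon>))\<^sup>2"
        using elim(2) by (simp add: \<delta>_def divide_less_eq less_imp_le)
      show ?thesis
        unfolding F_def \<delta>_def p_def by (rule area_tail_lower_bound[OF less_imp_le[OF elim(3)] lam K])
    qed
    finally show ?case
      by (simp add: F_def)
  qed
qed

end

theorem mainTheorem7:
  fixes M :: "'a measure" and X :: "nat \<Rightarrow> 'a \<Rightarrow> real" and a :: real
  assumes "prob_space M"
    and "\<And>i. i \<ge> 1 \<Longrightarrow> X i \<in> borel_measurable M"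
    and "prob_space.indep_vars M (\<lambda>_. borel) X {1..}"
    and "\<And>i. i \<ge> 1 \<Longrightarrow> distr M borel (X i) = distr M borel (X 1)"
    and "integrable M (X 1)"
    and "a > 0"
    and "(\<integral>\<omega>. X 1 \<omega> \<partial>M) = - a"
    and "integrable M (\<lambda>\<omega>. (X 1 \<omega>)\<^sup>2)"
  shows "\<forall>\<epsilon>>0. \<exists>C>0. \<forall>c::real. ennreal c < (\<integral>\<^sup>+ \<omega>. ennreal_of_enat (tau X \<omega>) \<partial>M) \<longrightarrow>
           (\<forall>\<^sub>F x in at_top.
              c * Fbar M X (sqrt (2 * a * x) + C * x powr (1/4 + \<epsilon>))
                \<le> measure M {\<omega> \<in> space M. A_tau X \<omega> > x})"
proof -
  interpret iid_walk M X a
  proof (rule iid_walk.intro)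
    show "prob_space M"
      by (fact assms)
    show "iid_walk_axioms M X a"
      by (rule iid_walk_axioms.intro) (fact assms)+
  qed
  show ?thesis
  proof (intro allI impI)
    fix \<epsilon> :: real
    assume "\<epsilon> > 0"
    with area_tail_asymptotic show "\<exists>C>0. \<forall>c::real. ennreal c < (\<integral>\<^sup>+ \<omega>. ennreal_of_enat (tau X \<omega>) \<partial>M) \<longrightarrow>
        (\<forall>\<^sub>F x in at_top. c * Fbar M X (sqrt (2 * a * x) + C * x powr (1/4 + \<epsilon>))
           \<le> measure M {\<omega> \<in> space M. A_tau X \<omega> > x})"
      by (intro exI[of _ 1]) simp
  qed
qed

end
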